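(* Let $U_1,\dots,U_n$ be subsets of a set $X$, $\mathcal C=\mathrm{code}(\mathcal U,X)\subseteq2^{[n]}$, and $I_{\Gamma(\mathcal C)}$ the Stanley–Reisner ideal of the polar complex of $\mathcal C$. Then for $\sigma,\tau\subseteq[n]$, $$x^\sigma y^\tau\in I_{\Gamma(\mathcal C)}\iff\bigcap_{i\in\sigma}U_i\subseteq\bigcup_{j\in\tau}U_j,$$ with the conventions $\bigcap_{i\in\emptyset}U_i=X$ and $\bigcup_{j\in\emptyset}U_j=\emptyset$.
   Context: For $\sigma\subseteq[n]$ the atom is $A_\sigma=\bigl(\bigcap_{i\in\sigma}U_i\bigr)\setminus\bigcup_{j\notin\sigma}U_j$ (with $A_\emptyset=X\setminus\bigcup_iU_i$), and $\mathrm{code}(\mathcal U,X)=\{\sigma:A_\sigma\neq\emptyset\}$. The polar complex $\Gamma(\mathcal C)$ is the simplicial complex on $[n]\sqcup\{\bar1,\dots,\bar n\}$ consisting of all subsets of $\sigma\sqcup\{\bar i:i\in[n]\setminus\sigma\}$, $\sigma\in\mathcal C$. In $S=\mathbb F_2[x_1,\dots,x_n,y_1,\dots,y_n]$, with $x^\sigma=\prod_{i\in\sigma}x_i$ and $y^\tau=\prod_{j\in\tau}y_j$, the Stanley–Reisner ideal is $I_{\Gamma(\mathcal C)}=\langle x^\sigma y^\tau:\sigma\sqcup\{\bar j:j\in\tau\}\notin\Gamma(\mathcal C)\rangle$. *)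

theory Defs
  imports "HOL-Library.Poly_Mapping" "HOL-Library.Z2"
begin

definition atom :: "nat \<Rightarrow> (nat \<Rightarrow> 'a set) \<Rightarrow> 'a set \<Rightarrow> nat set \<Rightarrow> 'a set" where
  "atom n U X \<sigma> = {p \<in> X. (\<forall>i\<in>\<sigma>. p \<in> U i) \<and> (\<forall>j\<in>{1..n} - \<sigma>. p \<notin> U j)}"

definition code :: "nat \<Rightarrow> (nat \<Rightarrow> 'a set) \<Rightarrow> 'a set \<Rightarrow> nat set set" where
  "code n U X = {\<sigma>. \<sigma> \<subseteq> {1..n} \<and> atom n U X \<sigma> \<noteq> {}}"

text \<open>Vertices of the polar complex: Inl i stands for i, Inr i for bar i.\<close>
definition polar_complex :: "nat \<Rightarrow> nat set set \<Rightarrow> (nat + nat) set set" where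
  "polar_complex n C = {F. \<exists>\<sigma>\<in>C. F \<subseteq> Inl ` \<sigma> \<union> Inr ` ({1..n} - \<sigma>)}"

text \<open>Polynomial ring over F_2 in variables x_i (Inl i) and y_j (Inr j).\<close>
type_synonym poly2 = "((nat + nat) \<Rightarrow>\<^sub>0 nat) \<Rightarrow>\<^sub>0 bit"

definition var :: "nat + nat \<Rightarrow> poly2" where
  "var v = Poly_Mapping.single (Poly_Mapping.single v 1) 1"

definition xy_mono :: "nat set \<Rightarrow> nat set \<Rightarrow> poly2" where
  "xy_mono \<sigma> \<tau> = (\<Prod>i\<in>\<sigma>. var (Inl i)) * (\<Prod>j\<in>\<tau>. var (Inr j))"

definition ideal_gen :: "poly2 set \<Rightarrow> poly2 set" where
  "ideal_gen G = {p. \<exists>F c. finite F \<and> F \<subseteq> G \<and> p = (\<Sum>g\<in>F. c g * g)}"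

definition SR_ideal :: "nat \<Rightarrow> (nat + nat) set set \<Rightarrow> poly2 set" where
  "SR_ideal n \<Gamma> = ideal_gen {xy_mono \<sigma> \<tau> | \<sigma> \<tau>. \<sigma> \<subseteq> {1..n} \<and> \<tau> \<subseteq> {1..n}
                                 \<and> Inl ` \<sigma> \<union> Inr ` \<tau> \<notin> \<Gamma>}"

definition big_inter :: "'a set \<Rightarrow> (nat \<Rightarrow> 'a set) \<Rightarrow> nat set \<Rightarrow> 'a set" where
  "big_inter X U \<sigma> = (if \<sigma> = {} then X else (\<Inter>i\<in>\<sigma>. U i))"

definition big_union :: "(nat \<Rightarrow> 'a set) \<Rightarrow> nat set \<Rightarrow> 'a set" where
  "big_union U \<tau> = (\<Union>j\<in>\<tau>. U j)"

end

theory Submission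
  imports Defs
begin

text \<open>A monomial lies in an ideal generated by monomials iff one of the generators divides
  it, and \<open>x\<^sup>\<sigma>' y\<^sup>\<tau>'\<close> divides \<open>x\<^sup>\<sigma> y\<^sup>\<tau>\<close> iff \<open>\<sigma>' \<subseteq> \<sigma>\<close> and \<open>\<tau>' \<subseteq> \<tau>\<close>. As the polar complex is
  closed under subsets, \<open>x\<^sup>\<sigma> y\<^sup>\<tau>\<close> lies in its Stanley-Reisner ideal iff the set of
  vertices \<open>\<sigma>\<close> and \<open>bar \<tau>\<close> is itself a non-face. That set is a face iff some atom \<open>A\<^sub>c\<close> with
  \<open>\<sigma> \<subseteq> c\<close> and \<open>\<tau> \<inter> c = {}\<close> is nonempty, i.e. iff some point \<open>p\<close> of the intersection of the
  \<open>U\<^sub>i\<close>, \<open>i \<in> \<sigma>\<close>, lies outside the union of the \<open>U\<^sub>j\<close>, \<open>j \<in> \<tau>\<close>; for such \<open>p\<close> take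
  \<open>c = {i. p \<in> U\<^sub>i}\<close>.\<close>

lemma single_mem_ideal_gen_monomials_iff:
  "Poly_Mapping.single m 1 \<in> ideal_gen ((\<lambda>g. Poly_Mapping.single g 1) ` G)
     \<longleftrightarrow> (\<exists>g\<in>G. \<exists>a. m = a + g)"
proof
  assume "Poly_Mapping.single m 1 \<in> ideal_gen ((\<lambda>g. Poly_Mapping.single g 1) ` G)"
  then obtain F and c :: "poly2 \<Rightarrow> poly2" where F: "F \<subseteq> (\<lambda>g. Poly_Mapping.single g 1) ` G"
    and eq: "Poly_Mapping.single m 1 = (\<Sum>f\<in>F. c f * f)"
    unfolding ideal_gen_def by blast
  have "m \<in> Poly_Mapping.keys (\<Sum>f\<in>F. c f * f)"
    by (simp flip: eq)
  then have "m \<in> (\<Union>f\<in>F. Poly_Mapping.keys (c f * f))"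
    by (rule subsetD[OF keys_sum])
  then obtain f where "f \<in> F" and "m \<in> Poly_Mapping.keys (c f * f)"
    by blast
  then obtain a b where m: "m = a + b" and b: "b \<in> Poly_Mapping.keys f"
    using keys_mult by blast
  obtain g where "g \<in> G" and "f = Poly_Mapping.single g 1"
    using \<open>f \<in> F\<close> F by blast
  with b have "b = g"
    by simp
  with \<open>g \<in> G\<close> m show "\<exists>g\<in>G. \<exists>a. m = a + g"
    by blast
next
  assume "\<exists>g\<in>G. \<exists>a. m = a + g"
  then obtain g a where "g \<in> G" and "m = a + g"
    by blast
  then have sum: "Poly_Mapping.single m 1 =
      (\<Sum>f\<in>{Poly_Mapping.single g 1}. Poly_Mapping.single a (1::bit) * f)"
    and gen: "{Poly_Mapping.single g 1} \<subseteq> (\<lambda>g. Poly_Mapping.single g 1) ` G"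
    by (simp_all add: mult_single)
  show "Poly_Mapping.single m 1 \<in> ideal_gen ((\<lambda>g. Poly_Mapping.single g 1) ` G)"
    unfolding ideal_gen_def mem_Collect_eq
    by (intro exI[of _ "{Poly_Mapping.single g 1}"] exI[of _ "\<lambda>_. Poly_Mapping.single a 1"]
        conjI finite.intros gen sum)
qed

definition xy_exponent :: "nat set \<Rightarrow> nat set \<Rightarrow> (nat + nat) \<Rightarrow>\<^sub>0 nat" where
  "xy_exponent \<sigma> \<tau> =
     (\<Sum>i\<in>\<sigma>. Poly_Mapping.single (Inl i) 1) + (\<Sum>j\<in>\<tau>. Poly_Mapping.single (Inr j) 1)"

lemma prod_single_one:
  assumes "finite A"
  shows "(\<Prod>i\<in>A. Poly_Mapping.single (f i) (1::'b::comm_semiring_1)) =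
         Poly_Mapping.single (\<Sum>i\<in>A. f i) 1"
  using assms by (induction A rule: finite_induct) (auto simp: mult_single)

lemma xy_mono_eq_single:
  assumes "finite \<sigma>" "finite \<tau>"
  shows "xy_mono \<sigma> \<tau> = Poly_Mapping.single (xy_exponent \<sigma> \<tau>) 1"
  using assms by (simp add: xy_mono_def var_def xy_exponent_def prod_single_one mult_single)

lemma keys_add_nat:
  "Poly_Mapping.keys (a + b :: 'a \<Rightarrow>\<^sub>0 nat) = Poly_Mapping.keys a \<union> Poly_Mapping.keys b"
  by (auto simp: in_keys_iff lookup_add)

lemma keys_sum_single_one:
  assumes "finite A"
  shows "Poly_Mapping.keys (\<Sum>i\<in>A. Poly_Mapping.single (f i) (1::nat)) = f ` A"
  using assms by (induction A rule: finite_induct) (auto simp: keys_add_nat)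

lemma keys_xy_exponent:
  assumes "finite \<sigma>" "finite \<tau>"
  shows "Poly_Mapping.keys (xy_exponent \<sigma> \<tau>) = Inl ` \<sigma> \<union> Inr ` \<tau>"
  unfolding xy_exponent_def keys_add_nat
    keys_sum_single_one[OF assms(1)] keys_sum_single_one[OF assms(2)] ..

lemma xy_exponent_add_imp_subset:
  assumes "finite \<sigma>" "finite \<tau>" "finite \<sigma>'" "finite \<tau>'"
    and "xy_exponent \<sigma> \<tau> = a + xy_exponent \<sigma>' \<tau>'"
  shows "Inl ` \<sigma>' \<union> Inr ` \<tau>' \<subseteq> Inl ` \<sigma> \<union> Inr ` \<tau>"
proof -
  have "Poly_Mapping.keys (xy_exponent \<sigma>' \<tau>') \<subseteq> Poly_Mapping.keys (xy_exponent \<sigma> \<tau>)"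
    by (simp add: assms(5) keys_add_nat)
  then show ?thesis
    by (simp add: keys_xy_exponent assms(1-4))
qed

lemma SR_ideal_eq_ideal_gen_exponents:
  "SR_ideal n \<Gamma> = ideal_gen ((\<lambda>g. Poly_Mapping.single g 1) `
     {xy_exponent \<sigma> \<tau> | \<sigma> \<tau>. \<sigma> \<subseteq> {1..n} \<and> \<tau> \<subseteq> {1..n} \<and> Inl ` \<sigma> \<union> Inr ` \<tau> \<notin> \<Gamma>})"
proof -
  have "xy_mono \<sigma> \<tau> = Poly_Mapping.single (xy_exponent \<sigma> \<tau>) 1"
    if "\<sigma> \<subseteq> {1..n}" "\<tau> \<subseteq> {1..n}" for \<sigma> \<tau>
    using that by (intro xy_mono_eq_single) (auto intro: finite_subset)
  then show ?thesis
    unfolding SR_ideal_def image_Collect by (intro arg_cong[where f = ideal_gen]) (auto; metis)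
qed

lemma polar_complex_subset_closed:
  "F \<in> polar_complex n C \<Longrightarrow> F' \<subseteq> F \<Longrightarrow> F' \<in> polar_complex n C"
  unfolding polar_complex_def by blast

lemma xy_mono_mem_SR_ideal_iff:
  assumes "\<sigma> \<subseteq> {1..n}" "\<tau> \<subseteq> {1..n}"
    and subset_closed: "\<And>F F'. F \<in> \<Gamma> \<Longrightarrow> F' \<subseteq> F \<Longrightarrow> F' \<in> \<Gamma>"
  shows "xy_mono \<sigma> \<tau> \<in> SR_ideal n \<Gamma> \<longleftrightarrow> Inl ` \<sigma> \<union> Inr ` \<tau> \<notin> \<Gamma>"
proof -
  have fin: "finite \<sigma>" "finite \<tau>"
    using assms(1,2) by (auto intro: finite_subset)
  have "xy_mono \<sigma> \<tau> \<in> SR_ideal n \<Gamma> \<longleftrightarrow>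
        (\<exists>\<sigma>' \<tau>' a. \<sigma>' \<subseteq> {1..n} \<and> \<tau>' \<subseteq> {1..n} \<and> Inl ` \<sigma>' \<union> Inr ` \<tau>' \<notin> \<Gamma> \<and>
                   xy_exponent \<sigma> \<tau> = a + xy_exponent \<sigma>' \<tau>')"
    unfolding SR_ideal_eq_ideal_gen_exponents xy_mono_eq_single[OF fin]
      single_mem_ideal_gen_monomials_iff by blast
  also have "\<dots> \<longleftrightarrow> Inl ` \<sigma> \<union> Inr ` \<tau> \<notin> \<Gamma>"
  proof
    assume "\<exists>\<sigma>' \<tau>' a. \<sigma>' \<subseteq> {1..n} \<and> \<tau>' \<subseteq> {1..n} \<and> Inl ` \<sigma>' \<union> Inr ` \<tau>' \<notin> \<Gamma> \<and>
                   xy_exponent \<sigma> \<tau> = a + xy_exponent \<sigma>' \<tau>'"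
    then obtain \<sigma>' \<tau>' a where "\<sigma>' \<subseteq> {1..n}" "\<tau>' \<subseteq> {1..n}"
      and nonface: "Inl ` \<sigma>' \<union> Inr ` \<tau>' \<notin> \<Gamma>"
      and "xy_exponent \<sigma> \<tau> = a + xy_exponent \<sigma>' \<tau>'"
      by blast
    with fin have "Inl ` \<sigma>' \<union> Inr ` \<tau>' \<subseteq> Inl ` \<sigma> \<union> Inr ` \<tau>"
      by (intro xy_exponent_add_imp_subset) (auto intro: finite_subset)
    with nonface show "Inl ` \<sigma> \<union> Inr ` \<tau> \<notin> \<Gamma>"
      using subset_closed by blast
  next
    assume "Inl ` \<sigma> \<union> Inr ` \<tau> \<notin> \<Gamma>"
    with assms(1,2) show "\<exists>\<sigma>' \<tau>' a. \<sigma>' \<subseteq> {1..n} \<and> \<tau>' \<subseteq> {1..n} \<and> Inl ` \<sigma>' \<union> Inr ` \<tau>' \<notin> \<Gamma> \<and>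
                   xy_exponent \<sigma> \<tau> = a + xy_exponent \<sigma>' \<tau>'"
      by (intro exI[of _ \<sigma>] exI[of _ \<tau>] exI[of _ 0]) simp
  qed
  finally show ?thesis .
qed

lemma mem_polar_complex_code_iff:
  assumes U: "\<forall>i\<in>{1..n}. U i \<subseteq> X"
    and \<sigma>: "\<sigma> \<subseteq> {1..n}" and \<tau>: "\<tau> \<subseteq> {1..n}"
  shows "Inl ` \<sigma> \<union> Inr ` \<tau> \<in> polar_complex n (code n U X)
         \<longleftrightarrow> \<not> big_inter X U \<sigma> \<subseteq> big_union U \<tau>"
proof
  assume "Inl ` \<sigma> \<union> Inr ` \<tau> \<in> polar_complex n (code n U X)"
  then obtain c where "c \<in> code n U X"
    and face: "Inl ` \<sigma> \<union> Inr ` \<tau> \<subseteq> Inl ` c \<union> Inr ` ({1..n} - c)"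
    unfolding polar_complex_def by blast
  then obtain p where p: "p \<in> atom n U X c"
    unfolding code_def by blast
  have "\<sigma> \<subseteq> c" "\<tau> \<subseteq> {1..n} - c"
    using face by auto
  with p have "p \<in> big_inter X U \<sigma>" "p \<notin> big_union U \<tau>"
    unfolding atom_def big_inter_def big_union_def by auto
  then show "\<not> big_inter X U \<sigma> \<subseteq> big_union U \<tau>"
    by blast
next
  assume "\<not> big_inter X U \<sigma> \<subseteq> big_union U \<tau>"
  then obtain p where p\<sigma>: "p \<in> big_inter X U \<sigma>" and p\<tau>: "p \<notin> big_union U \<tau>"
    by blast
  have "p \<in> X"
    using p\<sigma> \<sigma> U by (cases "\<sigma> = {}") (auto simp: big_inter_def)
  define c where "c = {i\<in>{1..n}. p \<in> U i}"
  have "p \<in> atom n U X c"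
    using \<open>p \<in> X\<close> unfolding atom_def c_def by auto
  then have "c \<in> code n U X"
    unfolding code_def c_def by auto
  moreover have "\<sigma> \<subseteq> c"
    using p\<sigma> \<sigma> unfolding c_def big_inter_def by (auto split: if_splits)
  moreover have "\<tau> \<subseteq> {1..n} - c"
    using p\<tau> \<tau> unfolding c_def big_union_def by auto
  ultimately show "Inl ` \<sigma> \<union> Inr ` \<tau> \<in> polar_complex n (code n U X)"
    unfolding polar_complex_def by blast
qed

theorem corollary6p8:
  fixes n :: nat and X :: "'a set" and U :: "nat \<Rightarrow> 'a set" and \<sigma> \<tau> :: "nat set"
  assumes "\<forall>i\<in>{1..n}. U i \<subseteq> X"
    and "\<sigma> \<subseteq> {1..n}" and "\<tau> \<subseteq> {1..n}"
  shows "xy_mono \<sigma> \<tau> \<in> SR_ideal n (polar_complex n (code n U X))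
         \<longleftrightarrow> big_inter X U \<sigma> \<subseteq> big_union U \<tau>"
proof -
  have "xy_mono \<sigma> \<tau> \<in> SR_ideal n (polar_complex n (code n U X))
        \<longleftrightarrow> Inl ` \<sigma> \<union> Inr ` \<tau> \<notin> polar_complex n (code n U X)"
    using assms(2,3) polar_complex_subset_closed by (rule xy_mono_mem_SR_ideal_iff)
  also have "\<dots> \<longleftrightarrow> big_inter X U \<sigma> \<subseteq> big_union U \<tau>"
    using mem_polar_complex_code_iff[OF assms] by blast
  finally show ?thesis .
qed

end
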